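(* Every bipartite graph $G$ is strongly $\Delta(G)$-edge-orientable.
   Context: An orientation of a graph $H$ is any digraph obtained by replacing each edge $uv$ with the arc $(u,v)$, with the arc $(v,u)$, or with both arcs. A kernel of a digraph $D$ is an independent set $S$ such that every vertex of $D-S$ has an out-neighbor in $S$. $D$ is kernel-perfect if every induced subdigraph of $D$ has a kernel. For $f:V(H)\to\mathbb{N}$, an orientation $D$ of $H$ is $f$-kernel-perfect if it is kernel-perfect and $f(v)\ge 1+d^+_D(v)$ for all $v$. For $f:E(G)\to\mathbb{N}$, $G$ is $f$-edge-orientable if its line graph $L(G)$ admits an $f$-kernel-perfect orientation. For $v\in V(G)$, define $f_{k,v}:E(G)\to\mathbb{N}$ by $f_{k,v}(e)=d_G(v)$ if $e$ is incident to $v$, and $f_{k,v}(e)=k$ otherwise. $G$ is strongly $k$-edge-orientable if $G$ is $f_{k,v}$-edge-orientable for every $v\in V(G)$. *)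

theory Defs
  imports Main
begin

definition graph :: "'a set \<Rightarrow> 'a set set \<Rightarrow> bool" where
  "graph V E \<longleftrightarrow> finite V \<and> (\<forall>e\<in>E. e \<subseteq> V \<and> card e = 2)"

definition bipartite :: "'a set \<Rightarrow> 'a set set \<Rightarrow> bool" where
  "bipartite V E \<longleftrightarrow> (\<exists>A \<subseteq> V. \<forall>e\<in>E. card (e \<inter> A) = 1 \<and> card (e \<inter> (V - A)) = 1)"

definition degree :: "'a set set \<Rightarrow> 'a \<Rightarrow> nat" where
  "degree E v = card {e \<in> E. v \<in> e}"

definition max_degree :: "'a set \<Rightarrow> 'a set set \<Rightarrow> nat" where
  "max_degree V E = Max (insert 0 (degree E ` V))"

definition line_adj :: "'a set set \<Rightarrow> 'a set \<Rightarrow> 'a set \<Rightarrow> bool" where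
  "line_adj E e f \<longleftrightarrow> e \<in> E \<and> f \<in> E \<and> e \<noteq> f \<and> e \<inter> f \<noteq> {}"

definition orientation :: "'b set \<Rightarrow> ('b \<Rightarrow> 'b \<Rightarrow> bool) \<Rightarrow> ('b \<times> 'b) set \<Rightarrow> bool" where
  "orientation W adj D \<longleftrightarrow>
     (\<forall>(u,v)\<in>D. u \<in> W \<and> v \<in> W \<and> adj u v) \<and>
     (\<forall>u\<in>W. \<forall>v\<in>W. adj u v \<longrightarrow> (u,v) \<in> D \<or> (v,u) \<in> D)"

definition kernel_of :: "('b \<times> 'b) set \<Rightarrow> 'b set \<Rightarrow> 'b set \<Rightarrow> bool" where
  "kernel_of D X S \<longleftrightarrow> S \<subseteq> X \<and> (\<forall>u\<in>S. \<forall>v\<in>S. (u,v) \<notin> D) \<and>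
     (\<forall>v\<in>X - S. \<exists>s\<in>S. (v,s) \<in> D)"

definition kernel_perfect :: "'b set \<Rightarrow> ('b \<times> 'b) set \<Rightarrow> bool" where
  "kernel_perfect W D \<longleftrightarrow> (\<forall>X \<subseteq> W. \<exists>S. kernel_of D X S)"

definition out_degree :: "('b \<times> 'b) set \<Rightarrow> 'b \<Rightarrow> nat" where
  "out_degree D v = card {u. (v,u) \<in> D}"

definition f_kernel_perfect_orientation ::
  "'b set \<Rightarrow> ('b \<Rightarrow> 'b \<Rightarrow> bool) \<Rightarrow> ('b \<Rightarrow> nat) \<Rightarrow> ('b \<times> 'b) set \<Rightarrow> bool" where
  "f_kernel_perfect_orientation W adj f D \<longleftrightarrow>
     orientation W adj D \<and> kernel_perfect W D \<and> (\<forall>v\<in>W. f v \<ge> 1 + out_degree D v)"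

definition f_edge_orientable :: "'a set set \<Rightarrow> ('a set \<Rightarrow> nat) \<Rightarrow> bool" where
  "f_edge_orientable E f \<longleftrightarrow> (\<exists>D. f_kernel_perfect_orientation E (line_adj E) f D)"

definition f_kv :: "'a set set \<Rightarrow> nat \<Rightarrow> 'a \<Rightarrow> 'a set \<Rightarrow> nat" where
  "f_kv E k v e = (if v \<in> e then degree E v else k)"

definition strongly_edge_orientable :: "'a set \<Rightarrow> 'a set set \<Rightarrow> nat \<Rightarrow> bool" where
  "strongly_edge_orientable V E k \<longleftrightarrow> (\<forall>v\<in>V. f_edge_orientable E (f_kv E k v))"

end

(*
  By Koenig's edge-colouring theorem (proved with Kempe chains) the edges of a bipartite graph
  with parts A and B have a proper colouring with colours 0, ..., \<Delta>-1; permuting colours, the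
  d(v) edges at a given vertex v \<in> A receive the top colours \<Delta>-d(v), ..., \<Delta>-1.  Galvin's
  orientation of the line graph lets two edges meeting at a vertex of A point towards the one of
  smaller colour, and two edges meeting in B towards the one of larger colour.  It is
  kernel-perfect: the edges of least colour at their A-endpoint absorb all others, and when two
  of them are joined by an arc, a kernel of the rest without its tail absorbs the tail as well.  An edge e = xy with x \<in> A has at most
  c(e) out-neighbours at x and \<Delta>-1-c(e) at y, so its out-degree is at most \<Delta>-1, and at most
  d(v)-1 when x = v because then the colours at x lie in [\<Delta>-d(v), \<Delta>).
*)

theory Submission
  imports Defs "HOL-Combinatorics.Transposition"
begin

definition bipartition :: "'a set \<Rightarrow> 'a set set \<Rightarrow> bool" where
  "bipartition A E \<longleftrightarrow> (\<forall>e\<in>E. \<exists>p q. e = {p, q} \<and> p \<in> A \<and> q \<notin> A)"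

definition proper_edge_colouring :: "'a set set \<Rightarrow> ('a set \<Rightarrow> nat) \<Rightarrow> bool" where
  "proper_edge_colouring E c \<longleftrightarrow> (\<forall>e\<in>E. \<forall>f\<in>E. e \<noteq> f \<longrightarrow> e \<inter> f \<noteq> {} \<longrightarrow> c e \<noteq> c f)"

lemma bipartitionE:
  assumes "bipartition A E" "e \<in> E"
  obtains p q where "e = {p, q}" "p \<in> A" "q \<notin> A"
  using assms unfolding bipartition_def by blast

lemma bipartition_subset: "bipartition A E \<Longrightarrow> F \<subseteq> E \<Longrightarrow> bipartition A F"
  unfolding bipartition_def by blast

lemma bipartition_edge_side: "bipartition A E \<Longrightarrow> {x, y} \<in> E \<Longrightarrow> x \<in> A \<longleftrightarrow> y \<notin> A"
  unfolding bipartition_def by (fastforce simp: doubleton_eq_iff)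

lemma bipartition_same_side_eq:
  "bipartition A E \<Longrightarrow> e \<in> E \<Longrightarrow> z \<in> e \<Longrightarrow> z' \<in> e \<Longrightarrow> (z \<in> A \<longleftrightarrow> z' \<in> A) \<Longrightarrow> z = z'"
  by (elim bipartitionE) auto

lemma bipartition_common_vertex_unique:
  assumes "bipartition A E" "e \<in> E" "f \<in> E" "e \<noteq> f" "z \<in> e \<inter> f" "z' \<in> e \<inter> f"
  shows "z = z'"
proof -
  obtain p q where "e = {p, q}" using assms(1,2) by (rule bipartitionE)
  moreover obtain p' q' where "f = {p', q'}" using assms(1,3) by (rule bipartitionE)
  ultimately show ?thesis using assms(4-6) by (auto simp: doubleton_eq_iff)
qed

lemma proper_edge_colouring_unique:
  "proper_edge_colouring E c \<Longrightarrow> e \<in> E \<Longrightarrow> f \<in> E \<Longrightarrow> x \<in> e \<Longrightarrow> x \<in> f \<Longrightarrow> c e = c f \<Longrightarrow> e = f"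
  unfolding proper_edge_colouring_def by blast

lemma proper_edge_colouring_comp:
  "proper_edge_colouring E c \<Longrightarrow> inj_on \<pi> (c ` E) \<Longrightarrow> proper_edge_colouring E (\<pi> \<circ> c)"
  unfolding proper_edge_colouring_def inj_on_def by (metis comp_apply image_eqI)

text \<open>\<open>(x, \<gamma>) \<in> kempe_walk E c \<alpha> \<beta> b\<close>: some walk from \<open>b\<close> whose edges are coloured
  alternately \<open>\<alpha>\<close>, \<open>\<beta>\<close>, \<open>\<alpha>\<close>, ... ends at \<open>x\<close> with an edge of colour \<open>\<gamma>\<close>.
  The vertices it reaches, together with \<open>b\<close>, form the Kempe chain of \<open>b\<close>.\<close>

inductive_set kempe_walk :: "'a set set \<Rightarrow> ('a set \<Rightarrow> nat) \<Rightarrow> nat \<Rightarrow> nat \<Rightarrow> 'a \<Rightarrow> ('a \<times> nat) set"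
  for E c \<alpha> \<beta> b where
  start: "{b, x} \<in> E \<Longrightarrow> c {b, x} = \<alpha> \<Longrightarrow> (x, \<alpha>) \<in> kempe_walk E c \<alpha> \<beta> b"
| step: "(x, \<gamma>) \<in> kempe_walk E c \<alpha> \<beta> b \<Longrightarrow> {x, y} \<in> E \<Longrightarrow> c {x, y} \<in> {\<alpha>, \<beta>} \<Longrightarrow> c {x, y} \<noteq> \<gamma>
    \<Longrightarrow> (y, c {x, y}) \<in> kempe_walk E c \<alpha> \<beta> b"

lemma kempe_walk_side:
  assumes "bipartition A E" "b \<notin> A" "(x, \<gamma>) \<in> kempe_walk E c \<alpha> \<beta> b"
  shows "(x \<in> A \<and> \<gamma> = \<alpha>) \<or> (x \<notin> A \<and> \<gamma> = \<beta>)"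
  using assms(3) by induction (use bipartition_edge_side[OF assms(1)] assms(2) in blast)+

lemma kempe_walk_last_edge:
  assumes "(x, \<gamma>) \<in> kempe_walk E c \<alpha> \<beta> b"
  shows "\<exists>z \<in> insert b (fst ` kempe_walk E c \<alpha> \<beta> b). {z, x} \<in> E \<and> c {z, x} = \<gamma>"
  using assms by cases (force simp: insert_commute)+

lemma kempe_walk_closed:
  fixes E :: "'a set set" and c :: "'a set \<Rightarrow> nat" and \<alpha> \<beta> :: nat and b :: 'a
  defines "W \<equiv> insert b (fst ` kempe_walk E c \<alpha> \<beta> b)"
  assumes bip: "bipartition A E" and proper: "proper_edge_colouring E c"
    and no_\<beta>_at_b: "\<forall>f\<in>E. b \<in> f \<longrightarrow> c f \<noteq> \<beta>"
    and f: "f \<in> E" "c f \<in> {\<alpha>, \<beta>}" "f \<inter> W \<noteq> {}"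
  shows "f \<subseteq> W"
proof
  fix y assume "y \<in> f"
  obtain x where x: "x \<in> f" "x \<in> W" using f(3) by blast
  show "y \<in> W"
  proof (cases "x = y")
    case False
    then have xy: "f = {x, y}" using bipartitionE[OF bip f(1)] x(1) \<open>y \<in> f\<close> by auto
    consider "x = b" | \<gamma> where "(x, \<gamma>) \<in> kempe_walk E c \<alpha> \<beta> b" using x(2) unfolding W_def by auto
    then show ?thesis
    proof cases
      case 1
      then have "(y, \<alpha>) \<in> kempe_walk E c \<alpha> \<beta> b" using no_\<beta>_at_b f xy by (auto intro: kempe_walk.start)
      then show ?thesis unfolding W_def by force
    next
      case (2 \<gamma>)
      show ?thesis
      proof (cases "c f = \<gamma>")
        case True
        obtain z where z: "z \<in> W" "{z, x} \<in> E" "c {z, x} = \<gamma>"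
          using kempe_walk_last_edge[OF 2] unfolding W_def by blast
        then have "{z, x} = f" using proper_edge_colouring_unique[OF proper _ f(1)] xy True by auto
        then show ?thesis using z(1) xy False by (auto simp: doubleton_eq_iff)
      next
        case False
        then have "(y, c f) \<in> kempe_walk E c \<alpha> \<beta> b" using kempe_walk.step[OF 2] f xy by auto
        then show ?thesis unfolding W_def by force
      qed
    qed
  qed (use x in simp)
qed

lemma kempe_recolouring:
  assumes bip: "bipartition A E" and proper: "proper_edge_colouring E c" and range: "\<forall>f\<in>E. c f < k"
    and a: "a \<in> A" and b: "b \<notin> A" and "\<alpha> < k" "\<beta> < k"
    and no_\<alpha>_at_a: "\<forall>f\<in>E. a \<in> f \<longrightarrow> c f \<noteq> \<alpha>" and no_\<beta>_at_b: "\<forall>f\<in>E. b \<in> f \<longrightarrow> c f \<noteq> \<beta>"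
  obtains c' where "proper_edge_colouring E c'" "\<forall>f\<in>E. c' f < k"
    "\<forall>f\<in>E. a \<in> f \<longrightarrow> c' f \<noteq> \<alpha>" "\<forall>f\<in>E. b \<in> f \<longrightarrow> c' f \<noteq> \<alpha>"
proof
  \<comment> \<open>Swap \<open>\<alpha>\<close> and \<open>\<beta>\<close> on the Kempe chain of \<open>b\<close>; parity keeps \<open>a\<close> off this chain.\<close>
  define W where "W = insert b (fst ` kempe_walk E c \<alpha> \<beta> b)"
  define c' where "c' f = (if f \<inter> W = {} then c f else transpose \<alpha> \<beta> (c f))" for f
  have closed: "f \<subseteq> W" if "f \<in> E" "c f \<in> {\<alpha>, \<beta>}" "f \<inter> W \<noteq> {}" for f
    using kempe_walk_closed[OF bip proper no_\<beta>_at_b] that unfolding W_def by blast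
  have unchanged: "c' f = c f" if "f \<in> E" "\<not> f \<subseteq> W" for f
  proof (cases "f \<inter> W = {}")
    case False
    then have "c f \<notin> {\<alpha>, \<beta>}" using closed[OF that(1)] that(2) by blast
    then show ?thesis unfolding c'_def by auto
  qed (simp add: c'_def)
  have "a \<notin> W"
  proof
    assume "a \<in> W"
    then obtain \<gamma> where walk: "(a, \<gamma>) \<in> kempe_walk E c \<alpha> \<beta> b" using a b unfolding W_def by auto
    then have "\<gamma> = \<alpha>" using kempe_walk_side[OF bip b] a by blast
    then show False using kempe_walk_last_edge[OF walk] no_\<alpha>_at_a by blast
  qed
  then show "\<forall>f\<in>E. a \<in> f \<longrightarrow> c' f \<noteq> \<alpha>"
    using unchanged no_\<alpha>_at_a by (metis subsetD)
  have "b \<in> W" unfolding W_def by simp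
  then show "\<forall>f\<in>E. b \<in> f \<longrightarrow> c' f \<noteq> \<alpha>"
    using no_\<beta>_at_b unfolding c'_def by (auto simp: transpose_eq_iff)
  show "\<forall>f\<in>E. c' f < k"
    using range \<open>\<alpha> < k\<close> \<open>\<beta> < k\<close> unfolding c'_def transpose_def by simp
  show "proper_edge_colouring E c'"
    unfolding proper_edge_colouring_def
  proof (intro ballI impI)
    fix e f assume ef: "e \<in> E" "f \<in> E" "e \<noteq> f" "e \<inter> f \<noteq> {}"
    then have ne: "c e \<noteq> c f" using proper unfolding proper_edge_colouring_def by blast
    obtain z where z: "z \<in> e" "z \<in> f" using ef(4) by blast
    show "c' e \<noteq> c' f"
    proof (cases "z \<in> W")
      case True
      then have "c' e = transpose \<alpha> \<beta> (c e)" "c' f = transpose \<alpha> \<beta> (c f)"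
        using z unfolding c'_def by auto
      then show ?thesis using ne transpose_eq_imp_eq by metis
    next
      case False
      then have "\<not> e \<subseteq> W" "\<not> f \<subseteq> W" using z by auto
      then show ?thesis using ne unchanged ef(1,2) by simp
    qed
  qed
qed

lemma proper_edge_colouring_insert:
  assumes "proper_edge_colouring E c" "e \<notin> E" "\<forall>f\<in>E. f \<inter> e \<noteq> {} \<longrightarrow> c f \<noteq> \<alpha>"
  shows "proper_edge_colouring (insert e E) (c(e := \<alpha>))"
  unfolding proper_edge_colouring_def
proof (intro ballI impI)
  fix f g assume "f \<in> insert e E" "g \<in> insert e E" "f \<noteq> g" "f \<inter> g \<noteq> {}"
  then show "(c(e := \<alpha>)) f \<noteq> (c(e := \<alpha>)) g"
    using assms unfolding proper_edge_colouring_def by (auto simp: Int_commute)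
qed

lemma degree_insert:
  assumes "finite E" "e \<notin> E" "a \<in> e"
  shows "degree (insert e E) a = Suc (degree E a)"
proof -
  have "{f \<in> insert e E. a \<in> f} = insert e {f \<in> E. a \<in> f}" using assms(3) by auto
  then show ?thesis unfolding degree_def using assms(1,2) by simp
qed

lemma degree_mono: "finite E \<Longrightarrow> F \<subseteq> E \<Longrightarrow> degree F a \<le> degree E a"
  unfolding degree_def by (rule card_mono) auto

lemma free_colour_exists:
  assumes "finite E" "degree E a < k"
  shows "\<exists>\<alpha><k. \<forall>f\<in>E. a \<in> f \<longrightarrow> c f \<noteq> \<alpha>"
proof (rule ccontr)
  assume "\<not> ?thesis"
  then have "{..<k} \<subseteq> c ` {f\<in>E. a \<in> f}" by blast
  then have "k \<le> card (c ` {f\<in>E. a \<in> f})"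
    using assms(1) card_mono[of "c ` {f\<in>E. a \<in> f}" "{..<k}"] by simp
  also have "\<dots> \<le> degree E a" unfolding degree_def using assms(1) by (simp add: card_image_le)
  finally show False using assms(2) by simp
qed

theorem bipartite_edge_colouring:
  assumes "finite E" "bipartition A E" "\<forall>x. degree E x \<le> k"
  obtains c where "proper_edge_colouring E c" "\<forall>e\<in>E. c e < k"
proof -
  have "\<exists>c. proper_edge_colouring E c \<and> (\<forall>e\<in>E. c e < k)"
    using assms
  proof (induction E rule: finite_induct)
    case empty
    then show ?case unfolding proper_edge_colouring_def by simp
  next
    case (insert e F)
    have bip: "bipartition A F" using insert.prems(1) by (rule bipartition_subset) blast
    have deg: "degree F x < k" if "x \<in> e" for x
      using degree_insert[OF insert.hyps(1,2) that] insert.prems(2)[rule_format, of x] by simp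
    have "\<forall>x. degree F x \<le> k"
      using insert.prems(2) degree_mono[of "insert e F" F] insert.hyps(1)
      by (meson finite_insert le_trans subset_insertI)
    then obtain c where c: "proper_edge_colouring F c" "\<forall>f\<in>F. c f < k"
      using insert.IH[OF bip] by blast
    obtain a b where e: "e = {a, b}" "a \<in> A" "b \<notin> A"
      using insert.prems(1) by (elim bipartitionE) blast
    obtain \<alpha> where \<alpha>: "\<alpha> < k" "\<forall>f\<in>F. a \<in> f \<longrightarrow> c f \<noteq> \<alpha>"
      using free_colour_exists[OF insert.hyps(1) deg] e by blast
    obtain \<beta> where \<beta>: "\<beta> < k" "\<forall>f\<in>F. b \<in> f \<longrightarrow> c f \<noteq> \<beta>"
      using free_colour_exists[OF insert.hyps(1) deg] e by blast
    obtain c' where c': "proper_edge_colouring F c'" "\<forall>f\<in>F. c' f < k"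
        "\<forall>f\<in>F. a \<in> f \<longrightarrow> c' f \<noteq> \<alpha>" "\<forall>f\<in>F. b \<in> f \<longrightarrow> c' f \<noteq> \<alpha>"
      using kempe_recolouring[OF bip c e(2,3) \<alpha>(1) \<beta>(1) \<alpha>(2) \<beta>(2)] by blast
    have "\<forall>f\<in>F. f \<inter> e \<noteq> {} \<longrightarrow> c' f \<noteq> \<alpha>" using c'(3,4) e(1) by auto
    then have "proper_edge_colouring (insert e F) (c'(e := \<alpha>))"
      by (rule proper_edge_colouring_insert[OF c'(1) insert.hyps(2)])
    moreover have "\<forall>f\<in>insert e F. (c'(e := \<alpha>)) f < k" using c'(2) \<alpha>(1) by simp
    ultimately show ?case by blast
  qed
  then show ?thesis using that by blast
qed

definition galvin_digraph :: "'a set \<Rightarrow> 'a set set \<Rightarrow> ('a set \<Rightarrow> nat) \<Rightarrow> ('a set \<times> 'a set) set" where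
  "galvin_digraph A E c =
     {(e, f). e \<in> E \<and> f \<in> E \<and> e \<noteq> f \<and> (\<exists>z\<in>e \<inter> f. if z \<in> A then c f < c e else c e < c f)}"

lemma galvin_arc_iff:
  assumes "bipartition A E" "e \<in> E" "f \<in> E" "e \<noteq> f" "z \<in> e" "z \<in> f"
  shows "(e, f) \<in> galvin_digraph A E c \<longleftrightarrow> (if z \<in> A then c f < c e else c e < c f)"
proof -
  have "(e, f) \<in> galvin_digraph A E c \<longleftrightarrow> (\<exists>z'\<in>e \<inter> f. if z' \<in> A then c f < c e else c e < c f)"
    using assms(2-4) unfolding galvin_digraph_def by simp
  also have "\<dots> \<longleftrightarrow> (if z \<in> A then c f < c e else c e < c f)"
    using bipartition_common_vertex_unique[OF assms(1-4), of z] assms(5,6) by blast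
  finally show ?thesis .
qed

lemma galvin_orientation:
  assumes "bipartition A E" "proper_edge_colouring E c"
  shows "orientation E (line_adj E) (galvin_digraph A E c)"
  unfolding orientation_def
proof (intro conjI ballI impI)
  show "\<And>p. p \<in> galvin_digraph A E c \<Longrightarrow> case p of (e, f) \<Rightarrow> e \<in> E \<and> f \<in> E \<and> line_adj E e f"
    unfolding galvin_digraph_def line_adj_def by auto
  fix e f assume ef: "e \<in> E" "f \<in> E" "line_adj E e f"
  then obtain z where z: "z \<in> e" "z \<in> f" and "e \<noteq> f" unfolding line_adj_def by blast
  then have "c e \<noteq> c f" using assms(2) ef(1,2) unfolding proper_edge_colouring_def by blast
  then have "c e < c f \<or> c f < c e" by arith
  then show "(e, f) \<in> galvin_digraph A E c \<or> (f, e) \<in> galvin_digraph A E c"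
    using galvin_arc_iff[OF assms(1) ef(1,2) \<open>e \<noteq> f\<close> z, where c = c]
      galvin_arc_iff[OF assms(1) ef(2,1) _ z(2,1), where c = c] \<open>e \<noteq> f\<close>
    by (cases "z \<in> A") auto
qed

definition colour_minimal_edges :: "'a set \<Rightarrow> ('a set \<Rightarrow> nat) \<Rightarrow> 'a set set \<Rightarrow> 'a set set" where
  "colour_minimal_edges A c X = {f \<in> X. \<exists>x \<in> f \<inter> A. \<forall>g\<in>X. x \<in> g \<longrightarrow> g \<noteq> f \<longrightarrow> c f < c g}"

lemma galvin_arc_to_colour_minimal:
  assumes bip: "bipartition A E" and proper: "proper_edge_colouring E c" and "X \<subseteq> E"
    and e: "e \<in> X - colour_minimal_edges A c X"
  shows "\<exists>f \<in> colour_minimal_edges A c X. (e, f) \<in> galvin_digraph A E c"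
proof -
  have eE: "e \<in> E" using e \<open>X \<subseteq> E\<close> by blast
  obtain x where x: "x \<in> e" "x \<in> A" using bipartitionE[OF bip eE] by blast
  obtain f where f: "f \<in> X" "x \<in> f" and least: "\<forall>g. g \<in> X \<and> x \<in> g \<longrightarrow> c f \<le> c g"
    using ex_has_least_nat[of "\<lambda>g. g \<in> X \<and> x \<in> g" e c] e x by blast
  have less_at_x: "c f < c g" if "g \<in> X" "x \<in> g" "g \<noteq> f" for g
  proof -
    have "c f \<noteq> c g" using proper_edge_colouring_unique[OF proper, of f g x] f that \<open>X \<subseteq> E\<close> by blast
    then show ?thesis using least that by (simp add: order_less_le)
  qed
  then have min: "f \<in> colour_minimal_edges A c X" unfolding colour_minimal_edges_def using f x by blast
  then have "f \<noteq> e" using e by blast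
  then have "c f < c e" using less_at_x e x(1) by blast
  then have "(e, f) \<in> galvin_digraph A E c"
    using galvin_arc_iff[OF bip eE _ \<open>f \<noteq> e\<close>[symmetric] x(1) f(2)] f(1) x(2) \<open>X \<subseteq> E\<close> by auto
  then show ?thesis using min by blast
qed

lemma galvin_arc_from_colour_minimal:
  assumes bip: "bipartition A E" and v: "v \<in> colour_minimal_edges A c X"
    and s: "s \<in> X" "(v, s) \<in> galvin_digraph A E c" and z: "z \<in> v" "z \<in> s"
  shows "z \<notin> A \<and> c v < c s"
proof -
  obtain x where x: "x \<in> v" "x \<in> A" and min: "\<forall>g\<in>X. x \<in> g \<longrightarrow> g \<noteq> v \<longrightarrow> c v < c g"
    using v unfolding colour_minimal_edges_def by blast
  have vs: "v \<in> E" "s \<in> E" "v \<noteq> s" using s(2) unfolding galvin_digraph_def by auto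
  have arc: "if z \<in> A then c s < c v else c v < c s"
    using galvin_arc_iff[OF bip vs z] s(2) by blast
  show ?thesis
  proof (cases "z \<in> A")
    case True
    then have "z = x" using bipartition_same_side_eq[OF bip vs(1) z(1) x(1)] x(2) by blast
    then have "c v < c s" using min s(1) z(2) vs(3) by blast
    then show ?thesis using arc True by simp
  qed (use arc in simp)
qed

lemma galvin_kernel_exists:
  assumes bip: "bipartition A E" and proper: "proper_edge_colouring E c"
  shows "finite X \<Longrightarrow> X \<subseteq> E \<Longrightarrow> \<exists>S. kernel_of (galvin_digraph A E c) X S"
proof (induction "card X" arbitrary: X rule: less_induct)
  case less
  let ?D = "galvin_digraph A E c" and ?M = "colour_minimal_edges A c X"
  have M: "?M \<subseteq> X" unfolding colour_minimal_edges_def by blast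
  \<comment> \<open>If an arc \<open>u \<rightarrow> v\<close> joins two colour-minimal edges, a kernel of \<open>X - {u}\<close> also absorbs \<open>u\<close>:
    \<open>v\<close> or the edge absorbing \<open>v\<close> meets \<open>u\<close> in its \<open>B\<close>-endpoint with a larger colour.\<close>
  show ?case
  proof (cases "\<exists>u\<in>?M. \<exists>v\<in>?M. (u, v) \<in> ?D")
    case False
    then have "kernel_of ?D X ?M"
      using M galvin_arc_to_colour_minimal[OF bip proper less.prems(2)] unfolding kernel_of_def by blast
    then show ?thesis by blast
  next
    case True
    then obtain u v where uv: "u \<in> ?M" "v \<in> ?M" "(u, v) \<in> ?D" by blast
    then obtain z where z: "z \<in> u" "z \<in> v" and "u \<noteq> v" unfolding galvin_digraph_def by blast
    have "v \<in> X" using uv(2) M by blast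
    then have zuv: "z \<notin> A \<and> c u < c v"
      using galvin_arc_from_colour_minimal[OF bip uv(1) _ uv(3) z] by blast
    have "u \<in> X" using uv(1) M by blast
    then have "card (X - {u}) < card X" using less.prems(1) by (meson card_Diff1_less)
    moreover have "finite (X - {u})" "X - {u} \<subseteq> E" using less.prems by auto
    ultimately obtain S where S: "kernel_of ?D (X - {u}) S" using less.hyps by blast
    have "\<exists>s\<in>S. (u, s) \<in> ?D"
    proof (cases "v \<in> S")
      case False
      then obtain s where s: "s \<in> S" "(v, s) \<in> ?D"
        using S \<open>v \<in> X\<close> \<open>u \<noteq> v\<close> unfolding kernel_of_def by blast
      then have sX: "s \<in> X" "s \<noteq> u" using S unfolding kernel_of_def by auto
      obtain z' where z': "z' \<in> v" "z' \<in> s" using s(2) unfolding galvin_digraph_def by blast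
      have z's: "z' \<notin> A \<and> c v < c s"
        using galvin_arc_from_colour_minimal[OF bip uv(2) sX(1) s(2) z'] .
      have uvs: "u \<in> E" "v \<in> E" "s \<in> E" using uv(3) s(2) unfolding galvin_digraph_def by auto
      have "z' = z" using bipartition_same_side_eq[OF bip uvs(2) z'(1) z(2)] z's zuv by blast
      then have "(u, s) \<in> ?D"
        using galvin_arc_iff[OF bip uvs(1,3) sX(2)[symmetric] z(1), where c = c] z'(2) zuv z's by simp
      then show ?thesis using s(1) by blast
    qed (use uv(3) in blast)
    then have "kernel_of ?D X S" using S unfolding kernel_of_def by blast
    then show ?thesis by blast
  qed
qed

lemma card_edges_at_coloured_in:
  assumes "proper_edge_colouring E c" "finite I"
  shows "card {f \<in> E. x \<in> f \<and> c f \<in> I} \<le> card I"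
proof (rule card_inj_on_le[OF _ _ assms(2)])
  show "inj_on c {f \<in> E. x \<in> f \<and> c f \<in> I}"
    using proper_edge_colouring_unique[OF assms(1)] by (intro inj_onI) blast
qed auto

lemma galvin_out_degree_le:
  assumes bip: "bipartition A E" and "finite E" and e: "e \<in> E" "e = {x, y}" "x \<in> A" "y \<notin> A"
  shows "out_degree (galvin_digraph A E c) e
           \<le> card {f \<in> E. x \<in> f \<and> c f < c e} + card {f \<in> E. y \<in> f \<and> c e < c f}"
proof -
  let ?L = "{f \<in> E. x \<in> f \<and> c f < c e}" and ?U = "{f \<in> E. y \<in> f \<and> c e < c f}"
  have "{f. (e, f) \<in> galvin_digraph A E c} \<subseteq> ?L \<union> ?U"
  proof
    fix f assume arc: "f \<in> {f. (e, f) \<in> galvin_digraph A E c}"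
    then obtain z where "z \<in> e" "z \<in> f" and f: "f \<in> E" "e \<noteq> f" unfolding galvin_digraph_def by blast
    then have "if z \<in> A then c f < c e else c e < c f"
      using galvin_arc_iff[OF bip e(1) f \<open>z \<in> e\<close> \<open>z \<in> f\<close>, where c = c] arc by simp
    moreover have "z = x \<or> z = y" using \<open>z \<in> e\<close> e(2) by blast
    ultimately show "f \<in> ?L \<union> ?U" using \<open>z \<in> f\<close> f(1) e(3,4) by auto
  qed
  then have "out_degree (galvin_digraph A E c) e \<le> card (?L \<union> ?U)"
    unfolding out_degree_def using \<open>finite E\<close> by (intro card_mono) auto
  also have "\<dots> \<le> card ?L + card ?U" by (rule card_Un_le)
  finally show ?thesis .
qed

lemma galvin_f_kernel_perfect_orientation:
  assumes fin: "finite E" and bip: "bipartition A E" and proper: "proper_edge_colouring E c"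
    and range: "\<forall>e\<in>E. c e < k" and v: "v \<in> A"
    and top: "\<forall>f\<in>E. v \<in> f \<longrightarrow> k - degree E v \<le> c f"
  shows "f_kernel_perfect_orientation E (line_adj E) (f_kv E k v) (galvin_digraph A E c)"
  unfolding f_kernel_perfect_orientation_def
proof (intro conjI ballI)
  show "orientation E (line_adj E) (galvin_digraph A E c)"
    by (rule galvin_orientation[OF bip proper])
  show "kernel_perfect E (galvin_digraph A E c)"
    unfolding kernel_perfect_def using galvin_kernel_exists[OF bip proper] fin finite_subset by blast
  fix e assume "e \<in> E"
  then obtain x y where e: "e = {x, y}" "x \<in> A" "y \<notin> A" by (rule bipartitionE[OF bip])
  define lo where "lo = (if v \<in> e then k - degree E v else 0)"
  have "x = v" if "v \<in> e"
    using bipartition_same_side_eq[OF bip \<open>e \<in> E\<close> _ that, of x] e v by simp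
  then have "{f \<in> E. x \<in> f \<and> c f < c e} = {f \<in> E. x \<in> f \<and> c f \<in> {lo..<c e}}"
    using top unfolding lo_def by auto
  then have L: "card {f \<in> E. x \<in> f \<and> c f < c e} \<le> c e - lo"
    using card_edges_at_coloured_in[OF proper, of "{lo..<c e}" x] by simp
  have "{f \<in> E. y \<in> f \<and> c e < c f} = {f \<in> E. y \<in> f \<and> c f \<in> {Suc (c e)..<k}}"
    using range by auto
  then have U: "card {f \<in> E. y \<in> f \<and> c e < c f} \<le> k - Suc (c e)"
    using card_edges_at_coloured_in[OF proper, of "{Suc (c e)..<k}" y] by simp
  have "out_degree (galvin_digraph A E c) e \<le> (c e - lo) + (k - Suc (c e))"
    using galvin_out_degree_le[OF bip fin \<open>e \<in> E\<close> e, where c = c] L U by linarith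
  moreover have "c e < k" "v \<in> e \<Longrightarrow> k - degree E v \<le> c e" using range top \<open>e \<in> E\<close> by auto
  ultimately show "1 + out_degree (galvin_digraph A E c) e \<le> f_kv E k v e"
    unfolding f_kv_def lo_def by (cases "v \<in> e") auto
qed

lemma permutation_moving_to_top:
  assumes "C \<subseteq> {..<k}"
  obtains \<pi> :: "nat \<Rightarrow> nat" where "bij_betw \<pi> {..<k} {..<k}" "\<forall>i\<in>C. k - card C \<le> \<pi> i"
proof -
  let ?d = "card C"
  have fin: "finite C" using assms finite_subset by blast
  have "?d \<le> k" using card_mono[OF _ assms] by simp
  obtain g where g: "bij_betw g C {k - ?d..<k}"
    using finite_same_card_bij[OF fin, of "{k - ?d..<k}"] \<open>?d \<le> k\<close> by auto
  obtain h where h: "bij_betw h ({..<k} - C) {..<k - ?d}"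
    using finite_same_card_bij[of "{..<k} - C" "{..<k - ?d}"] assms fin by (auto simp: card_Diff_subset)
  define \<pi> where "\<pi> i = (if i \<in> C then g i else h i)" for i
  have "bij_betw \<pi> C {k - ?d..<k}" using g by (simp add: \<pi>_def cong: bij_betw_cong)
  moreover have "bij_betw \<pi> ({..<k} - C) {..<k - ?d}"
    using h by (rule bij_betw_cong[THEN iffD1, rotated]) (simp add: \<pi>_def)
  ultimately have "bij_betw \<pi> (C \<union> ({..<k} - C)) ({k - ?d..<k} \<union> {..<k - ?d})"
    by (rule bij_betw_combine) auto
  moreover have "C \<union> ({..<k} - C) = {..<k}" "{k - ?d..<k} \<union> {..<k - ?d} = {..<k}"
    using assms \<open>?d \<le> k\<close> by auto
  ultimately have "bij_betw \<pi> {..<k} {..<k}" by simp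
  moreover have "\<forall>i\<in>C. k - ?d \<le> \<pi> i" using g unfolding \<pi>_def bij_betw_def by auto
  ultimately show ?thesis using that by blast
qed

lemma bipartite_f_kv_edge_orientable:
  assumes fin: "finite E" and bip: "bipartition A E" and v: "v \<in> A" and deg: "\<forall>x. degree E x \<le> k"
  shows "f_edge_orientable E (f_kv E k v)"
proof -
  obtain c0 where c0: "proper_edge_colouring E c0" "\<forall>e\<in>E. c0 e < k"
    using bipartite_edge_colouring[OF fin bip deg] by blast
  let ?C = "c0 ` {f \<in> E. v \<in> f}"
  have "inj_on c0 {f \<in> E. v \<in> f}"
    using proper_edge_colouring_unique[OF c0(1)] by (intro inj_onI) blast
  then have card_C: "card ?C = degree E v" unfolding degree_def by (rule card_image)
  have "?C \<subseteq> {..<k}" using c0(2) by auto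
  then obtain \<pi> where \<pi>: "bij_betw \<pi> {..<k} {..<k}" "\<forall>i\<in>?C. k - card ?C \<le> \<pi> i"
    by (rule permutation_moving_to_top)
  have "inj_on \<pi> (c0 ` E)" using \<pi>(1) c0(2) unfolding bij_betw_def by (auto intro: inj_on_subset)
  then have "proper_edge_colouring E (\<pi> \<circ> c0)" by (rule proper_edge_colouring_comp[OF c0(1)])
  moreover have "\<forall>e\<in>E. (\<pi> \<circ> c0) e < k" using \<pi>(1) c0(2) unfolding bij_betw_def by auto
  moreover have "\<forall>f\<in>E. v \<in> f \<longrightarrow> k - degree E v \<le> (\<pi> \<circ> c0) f" using \<pi>(2) card_C by auto
  ultimately show ?thesis
    unfolding f_edge_orientable_def using galvin_f_kernel_perfect_orientation[OF fin bip] v by blast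
qed

lemma graph_finite_edges: "graph V E \<Longrightarrow> finite E"
  unfolding graph_def by (meson Pow_iff finite_Pow_iff finite_subset subsetI)

lemma degree_le_max_degree:
  assumes "graph V E"
  shows "degree E x \<le> max_degree V E"
proof (cases "x \<in> V")
  case True
  then show ?thesis using assms unfolding graph_def max_degree_def by simp
next
  case False
  then have "{e \<in> E. x \<in> e} = {}" using assms unfolding graph_def by blast
  then show ?thesis unfolding degree_def by (metis card.empty le0)
qed

lemma bipartite_bipartition:
  assumes "graph V E" "bipartite V E"
  obtains A where "bipartition A E" "bipartition (V - A) E"
proof -
  obtain A where A: "A \<subseteq> V" "\<forall>e\<in>E. card (e \<inter> A) = 1 \<and> card (e \<inter> (V - A)) = 1"
    using assms(2) unfolding bipartite_def by blast
  have "\<exists>p q. e = {p, q} \<and> p \<in> A \<and> q \<in> V - A" if e: "e \<in> E" for e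
  proof -
    obtain p where "e \<inter> A = {p}" using A(2) e by (meson card_1_singletonE)
    moreover obtain q where "e \<inter> (V - A) = {q}" using A(2) e by (meson card_1_singletonE)
    moreover have "e \<subseteq> V" using assms(1) e unfolding graph_def by blast
    ultimately show ?thesis by blast
  qed
  then have "bipartition A E" "bipartition (V - A) E" unfolding bipartition_def by (blast, blast)
  then show ?thesis using that by blast
qed

theorem mainTheorem13:
  fixes V :: "'a set" and E :: "'a set set"
  assumes "graph V E" and "bipartite V E"
  shows "strongly_edge_orientable V E (max_degree V E)"
  unfolding strongly_edge_orientable_def
proof
  fix v assume "v \<in> V"
  obtain A where A: "bipartition A E" "bipartition (V - A) E"
    using bipartite_bipartition[OF assms] .
  have fin: "finite E" using assms(1) by (rule graph_finite_edges)
  have deg: "\<forall>x. degree E x \<le> max_degree V E" using assms(1) by (simp add: degree_le_max_degree)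
  show "f_edge_orientable E (f_kv E (max_degree V E) v)"
  proof (cases "v \<in> A")
    case True
    then show ?thesis by (rule bipartite_f_kv_edge_orientable[OF fin A(1) _ deg])
  next
    case False
    then have "v \<in> V - A" using \<open>v \<in> V\<close> by blast
    then show ?thesis by (rule bipartite_f_kv_edge_orientable[OF fin A(2) _ deg])
  qed
qed

end
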